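(* For any infinite word $w$ over a finite alphabet $A$ and any graph $H$ on $A$ with loops allowed, the class $\mathcal{X}=\mathcal{P}(w,H)$ has finite distinguishing number.
   Context: For positive integers $u_1<\dots<u_m$, $G_{w,H}(u_1,\dots,u_m)$ is the graph on $\{u_1,\dots,u_m\}$ in which $u_iu_j$ is an edge iff ($|u_i-u_j|=1$ and $w_{u_i}w_{u_j}\notin E(H)$) or ($|u_i-u_j|>1$ and $w_{u_i}w_{u_j}\in E(H)$) (for equal letters $a$, a loop at $a$). $\mathcal{P}(w,H)$ is the class of all graphs isomorphic to some $G_{w,H}(u_1,\dots,u_m)$. Distinguishing number: for $X\subseteq V(G)$, disjoint sets $U_1,\dots,U_m$ are distinguished by $X$ if vertices in the same $U_i$ have the same neighbourhood in $X$ and vertices in different $U_i$ have different neighbourhoods in $X$. $k_{\mathcal{X}}=\infty$ if for all $k,m$ some $G\in\mathcal{X}$ and $X\subseteq V(G)$ distinguish at least $m$ sets of size at least $k$; otherwise $k_{\mathcal{X}}$ is finite (the least $k$ such that for some $m$ no vertex subset of a graph in $\mathcal{X}$ distinguishes more than $m$ sets of size at least $k$). *)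

theory Defs
  imports Main
begin

text \<open>Vertices of graphs in a class are taken to be natural numbers (every finite
  graph is isomorphic to one on natural numbers).\<close>

type_synonym graph = "nat set \<times> (nat \<Rightarrow> nat \<Rightarrow> bool)"

definition dist_nat :: "nat \<Rightarrow> nat \<Rightarrow> nat" where
  "dist_nat u v = (if u \<le> v then v - u else u - v)"

definition wadj :: "(nat \<Rightarrow> 'a) \<Rightarrow> ('a \<Rightarrow> 'a \<Rightarrow> bool) \<Rightarrow> nat \<Rightarrow> nat \<Rightarrow> bool" where
  "wadj w H u v \<longleftrightarrow> u \<noteq> v \<and>
     ((dist_nat u v = 1 \<and> \<not> H (w u) (w v)) \<or> (dist_nat u v > 1 \<and> H (w u) (w v)))"

definition in_P :: "(nat \<Rightarrow> 'a) \<Rightarrow> ('a \<Rightarrow> 'a \<Rightarrow> bool) \<Rightarrow> graph \<Rightarrow> bool" where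
  "in_P w H G \<longleftrightarrow> (\<exists>U f. finite U \<and> U \<subseteq> {1..} \<and> bij_betw f (fst G) U \<and>
      (\<forall>x\<in>fst G. \<forall>y\<in>fst G. snd G x y \<longleftrightarrow> wadj w H (f x) (f y)))"

definition nbhd :: "graph \<Rightarrow> nat \<Rightarrow> nat set" where
  "nbhd G x = {y \<in> fst G. snd G x y}"

definition distinguishes :: "graph \<Rightarrow> nat set \<Rightarrow> (nat \<Rightarrow> nat set) \<Rightarrow> nat \<Rightarrow> bool" where
  "distinguishes G X U m \<longleftrightarrow>
     (\<forall>i<m. U i \<subseteq> fst G) \<and>
     (\<forall>i<m. \<forall>j<m. i \<noteq> j \<longrightarrow> U i \<inter> U j = {}) \<and>
     (\<forall>i<m. \<forall>x\<in>U i. \<forall>y\<in>U i. nbhd G x \<inter> X = nbhd G y \<inter> X) \<and>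
     (\<forall>i<m. \<forall>j<m. i \<noteq> j \<longrightarrow> (\<forall>x\<in>U i. \<forall>y\<in>U j. nbhd G x \<inter> X \<noteq> nbhd G y \<inter> X))"

definition finite_dist_number :: "(graph \<Rightarrow> bool) \<Rightarrow> bool" where
  "finite_dist_number C \<longleftrightarrow> (\<exists>k m::nat. \<forall>G n U X. C G \<and> X \<subseteq> fst G \<and> distinguishes G X U n \<and>
      (\<forall>i<n. card (U i) \<ge> k) \<longrightarrow> n \<le> m)"

end

theory Submission
  imports Defs
begin

text \<open>Fix a representation f of G as G_{w,H}(V) and a set X of vertices. For a letter a let
  N a be the set of y \<in> X with H a (w (f y)). A vertex x at position p sees y \<in> X exactly as
  predicted by N (w p), except possibly for the at most three y with f y within distance 1 of p.
  So if a class of vertices with a common trace on X is not of the form N a, every letter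
  occurs on it at most three times, and the class has at most 3|A| elements. Hence the large
  classes have traces among the |A| sets N a, and distinguished classes have distinct
  traces: with k = 3|A| + 1 at most |A| of them can be distinguished.\<close>

lemma dist_nat_le_one: "dist_nat u v \<le> 1 \<Longrightarrow> u \<in> {v - 1, v, Suc v}"
  unfolding dist_nat_def by (auto split: if_splits)

lemma wadj_iff_H_if_far:
  "dist_nat u v > 1 \<Longrightarrow> wadj w H u v \<longleftrightarrow> H (w u) (w v)"
  unfolding wadj_def dist_nat_def by (auto split: if_splits)

lemma card_le_three_if_near:
  assumes "inj_on f S" and "f ` S \<subseteq> {p - 1, p, Suc p}"
  shows "card S \<le> 3"
proof -
  have "card S = card (f ` S)" using assms(1) by (simp add: card_image)
  also have "\<dots> \<le> card {p - 1, p, Suc p}" using assms(2) by (intro card_mono) simp_all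
  also have "\<dots> \<le> 3" by (simp add: card_insert_if)
  finally show ?thesis .
qed

lemma card_le_mult_card_UNIV_if_fibres_le:
  fixes g :: "'b \<Rightarrow> 'a::finite"
  assumes "\<And>a. card {x\<in>S. g x = a} \<le> c"
  shows "card S \<le> c * card (UNIV :: 'a set)"
proof -
  have "S = (\<Union>a. {x\<in>S. g x = a})" by auto
  then have "card S \<le> (\<Sum>a\<in>UNIV. card {x\<in>S. g x = a})"
    using card_UN_le[of "UNIV::'a set" "\<lambda>a. {x\<in>S. g x = a}"] by simp
  also have "\<dots> \<le> (\<Sum>a\<in>(UNIV::'a set). c)" by (intro sum_mono assms)
  finally show ?thesis by (simp add: mult.commute)
qed

lemma large_class_has_letter_trace:
  fixes w :: "nat \<Rightarrow> 'a::finite"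
  assumes inj: "inj_on f (fst G)"
    and adj: "\<forall>x\<in>fst G. \<forall>y\<in>fst G. snd G x y \<longleftrightarrow> wadj w H (f x) (f y)"
    and X: "X \<subseteq> fst G" and S: "S \<subseteq> fst G"
    and same: "\<forall>x\<in>S. \<forall>x'\<in>S. nbhd G x \<inter> X = nbhd G x' \<inter> X"
    and large: "card S > 3 * card (UNIV :: 'a set)"
  shows "\<exists>a. \<forall>x\<in>S. nbhd G x \<inter> X = {y\<in>X. H a (w (f y))}"
proof (rule ccontr)
  assume no_letter: "\<not> ?thesis"
  obtain x0 where x0: "x0 \<in> S" using large by (metis card.empty equals0I not_less0)
  have "card {x\<in>S. w (f x) = a} \<le> 3" for a
  proof -
    have "nbhd G x0 \<inter> X \<noteq> {y\<in>X. H a (w (f y))}" using no_letter same x0 by blast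
    then obtain y where y: "y \<in> X" "y \<in> nbhd G x0 \<longleftrightarrow> \<not> H a (w (f y))" by blast
    have "f x \<in> {f y - 1, f y, Suc (f y)}" if x: "x \<in> S" "w (f x) = a" for x
    proof -
      have "wadj w H (f x) (f y) \<longleftrightarrow> \<not> H (w (f x)) (w (f y))"
        using x x0 y same adj X S unfolding nbhd_def by blast
      then show ?thesis using wadj_iff_H_if_far dist_nat_le_one by (metis not_le)
    qed
    moreover have "inj_on f {x\<in>S. w (f x) = a}"
      by (rule inj_on_subset[OF inj]) (use S in blast)
    ultimately show ?thesis by (intro card_le_three_if_near[where p = "f y"]) blast+
  qed
  then have "card S \<le> 3 * card (UNIV :: 'a set)" by (rule card_le_mult_card_UNIV_if_fibres_le)
  with large show False by simp
qed

lemma distinguishesD: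
  assumes "distinguishes G X U n" and "i < n"
  shows "U i \<subseteq> fst G" and "\<forall>x\<in>U i. \<forall>x'\<in>U i. nbhd G x \<inter> X = nbhd G x' \<inter> X"
proof -
  have "\<forall>i<n. U i \<subseteq> fst G"
    using assms(1) unfolding distinguishes_def by (elim conjE)
  with assms(2) show "U i \<subseteq> fst G" by blast
  have "\<forall>i<n. \<forall>x\<in>U i. \<forall>x'\<in>U i. nbhd G x \<inter> X = nbhd G x' \<inter> X"
    using assms(1) unfolding distinguishes_def by (elim conjE)
  with assms(2) show "\<forall>x\<in>U i. \<forall>x'\<in>U i. nbhd G x \<inter> X = nbhd G x' \<inter> X" by (elim allE impE)
qed

lemma distinguishes_le_card_if_traces_indexed:
  fixes N :: "'b::finite \<Rightarrow> nat set"
  assumes dist: "distinguishes G X U n" and nonempty: "\<forall>i<n. U i \<noteq> {}"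
    and indexed: "\<forall>i<n. \<exists>b. \<forall>x\<in>U i. nbhd G x \<inter> X = N b"
  shows "n \<le> card (UNIV :: 'b set)"
proof -
  have "\<forall>i\<in>{..<n}. \<exists>b. \<forall>x\<in>U i. nbhd G x \<inter> X = N b" using indexed by simp
  from bchoice[OF this] obtain g where g: "\<forall>i\<in>{..<n}. \<forall>x\<in>U i. nbhd G x \<inter> X = N (g i)"
    by blast
  have distinct: "\<forall>i<n. \<forall>j<n. i \<noteq> j \<longrightarrow> (\<forall>x\<in>U i. \<forall>y\<in>U j. nbhd G x \<inter> X \<noteq> nbhd G y \<inter> X)"
    using dist unfolding distinguishes_def by (elim conjE)
  have "inj_on g {..<n}"
  proof (rule inj_onI, rule ccontr)
    fix i j assume ij: "i \<in> {..<n}" "j \<in> {..<n}" "g i = g j" "i \<noteq> j"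
    then obtain x y where xy: "x \<in> U i" "y \<in> U j" using nonempty by blast
    then have "nbhd G x \<inter> X \<noteq> nbhd G y \<inter> X" using distinct ij by blast
    moreover have "nbhd G x \<inter> X = N (g i)" "nbhd G y \<inter> X = N (g j)" using g ij xy by blast+
    ultimately show False using ij(3) by metis
  qed
  then have "card {..<n} \<le> card (UNIV :: 'b set)" by (rule card_inj_on_le) simp_all
  then show ?thesis by simp
qed

theorem lemma3p5:
  fixes w :: "nat \<Rightarrow> 'a::finite" and H :: "'a \<Rightarrow> 'a \<Rightarrow> bool"
  assumes "symp H"
  shows "finite_dist_number (in_P w H)"
  unfolding finite_dist_number_def
proof (intro exI allI impI)
  fix G n U X
  assume asm: "in_P w H G \<and> X \<subseteq> fst G \<and> distinguishes G X U n \<and>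
      (\<forall>i<n. card (U i) \<ge> 3 * card (UNIV :: 'a set) + 1)"
  then obtain f where inj: "inj_on f (fst G)"
    and adj: "\<forall>x\<in>fst G. \<forall>y\<in>fst G. snd G x y \<longleftrightarrow> wadj w H (f x) (f y)"
    unfolding in_P_def bij_betw_def by blast
  have X: "X \<subseteq> fst G" and dist: "distinguishes G X U n"
    and large: "\<forall>i<n. card (U i) > 3 * card (UNIV :: 'a set)"
    using asm by auto
  have letter: "\<forall>i<n. \<exists>a. \<forall>x\<in>U i. nbhd G x \<inter> X = {y\<in>X. H a (w (f y))}"
  proof (intro allI impI)
    fix i assume "i < n"
    with large show "\<exists>a. \<forall>x\<in>U i. nbhd G x \<inter> X = {y\<in>X. H a (w (f y))}"
      by (intro large_class_has_letter_trace[OF inj adj X distinguishesD[OF dist]]) simp_all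
  qed
  have nonempty: "\<forall>i<n. U i \<noteq> {}" using large by (metis card.empty not_less0)
  show "n \<le> card (UNIV :: 'a set)"
    by (rule distinguishes_le_card_if_traces_indexed[OF dist nonempty letter])
qed

end
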